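(* Let $X$ be the solution of $$\mathrm{d}X(t)=\sum_{m=0}^M\big(A_mX(t)+g_m(t,X(t))\big)\star\mathrm{d}W_m(t),\qquad X(t_0)=x_0,$$ where $A_0,\dots,A_M\in\mathbb{R}^{d\times d}$ pairwise commute. Assume that (a) $A_m$ is skew-symmetric for every $m>0$; (b) $W^n$ and $V^0_n$ are the numerical approximations of $W(t_n)$ and of the globally transformed SDE for $V^0$ obtained by applying some one-step method to its autonomous form (defined in the context), with $W^n_0=W_0(t_n)=t_n$; (c) this approximation is of weak order $\tilde p$: for every $g\in C^{2(\tilde p+1)}_P(\mathbb{R}^{M+1}\times\mathbb{R}^d,\mathbb{R})$ there exists $c\in\mathbb{R}$ such that for all $N\in\mathbb{N}$ and $n\in\{0,\dots,N\}$, $|\mathbb{E}\,g(W^n,V^0_n)-\mathbb{E}\,g(W(t_n),V^0(t_n))|\le ch^{\tilde p}$. Then for every $f\in C^{2(\tilde p+1)}_P(\mathbb{R}^d,\mathbb{R})$ there exists $\tilde c\in\mathbb{R}$ such that $Y_n=e^{\bar L^0_n}V^0_n$ satisfies, for all $N\in\mathbb{N}$ and $n\in\{0,\dots,N\}$, $$|\mathbb{E}f(Y_n)-\mathbb{E}f(X(t_n))|\le\tilde ch^{\tilde p}.$$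
   Context: Setting: $d,M\in\mathbb{N}$, $t_0<T$; $W_1,\dots,W_M$ independent scalar Wiener processes, $W_0(t)=t$, $W(t)=(W_m(t))_{m=0}^M$; $g_m:[t_0,T]\times\mathbb{R}^d\to\mathbb{R}^d$ such that the SDE has a unique solution. Integrals $\star\,\mathrm{d}W_m$ are all Itô ($\gamma^\star=\tfrac12$) or all Stratonovich ($\gamma^\star=0$). Equidistant grid $h=(T-t_0)/N$, $t_n=t_0+nh$. Let $\Lambda=A_0-\gamma^\star\sum_{m=1}^MA_m^2$, $\tilde g_0=g_0-2\gamma^\star\sum_{m=1}^MA_mg_m$, $\tilde g_m=g_m$ ($m\ge1$), $L^0(t)=\Lambda(t-t_0)+\sum_{m=1}^MA_m(W_m(t)-W_m(t_0))$, $V^0(t)=e^{-L^0(t)}X(t)$. The globally transformed SDE is $\mathrm{d}V^0=\sum_{m=0}^M\hat g^0_m(W(t),V^0)\star\mathrm{d}W_m$, $V^0(t_0)=x_0$, with $\hat g^0_m(w,x)=e^{-\ell(w)}\tilde g_m(w_0,e^{\ell(w)}x)$, $\ell(w)=\Lambda(w_0-t_0)+\sum_{m\ge1}A_m(w_m-W_m(t_0))$; its autonomous form is the SDE for $(W^\top,(V^0)^\top)^\top$ with coefficients $(\delta_{0m},\dots,\delta_{Mm},(\hat g^0_m)^\top)^\top$. Also $\bar L^0_n=\Lambda(t_n-t_0)+\sum_{m=1}^MA_m(W^n_m-W^0_m)$, with $W^0=W(t_0)$. $C^k_P(\mathbb{R}^q,\mathbb{R})$ is the set of $u\in C^k(\mathbb{R}^q,\mathbb{R})$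 such that $u$ and all its partial derivatives of order $\le k$ are polynomially bounded ($|u(x)|\le K(1+\|x\|_2^\kappa)$ for some $K,\kappa\ge0$). *)

theory Defs
  imports "HOL-Analysis.Analysis" "HOL-Probability.Probability"
begin

definition mat_pow :: "real^'n^'n \<Rightarrow> nat \<Rightarrow> real^'n^'n" where
  "mat_pow A k = (((**) A) ^^ k) (mat 1)"

definition mexp :: "real^'n^'n \<Rightarrow> real^'n^'n" where
  "mexp A = (\<Sum>k. (1 / fact k) *\<^sub>R mat_pow A k)"

definition poly_bounded :: "('a::real_normed_vector \<Rightarrow> real) \<Rightarrow> bool" where
  "poly_bounded u \<longleftrightarrow> (\<exists>K \<kappa>. K \<ge> 0 \<and> \<kappa> \<ge> 0 \<and> (\<forall>x. \<bar>u x\<bar> \<le> K * (1 + norm x powr \<kappa>)))"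

fun CkP :: "nat \<Rightarrow> ('a::euclidean_space \<Rightarrow> real) set" where
  "CkP 0 = {u. continuous_on UNIV u \<and> poly_bounded u}"
| "CkP (Suc k) = {u. continuous_on UNIV u \<and> poly_bounded u \<and> (\<forall>x. u differentiable (at x)) \<and>
      (\<forall>i\<in>Basis. (\<lambda>x. frechet_derivative u (at x) i) \<in> CkP k)}"

definition indep_wiener ::
  "'w measure \<Rightarrow> real \<Rightarrow> real \<Rightarrow> ('m::finite \<Rightarrow> real) \<Rightarrow> ('m \<Rightarrow> real \<Rightarrow> 'w \<Rightarrow> real) \<Rightarrow> bool" where
  "indep_wiener P t0 T w0 W \<longleftrightarrow>
     (\<forall>m. \<forall>t\<in>{t0..T}. W m t \<in> borel_measurable P) \<and>
     (\<forall>m. \<forall>\<omega>\<in>space P. W m t0 \<omega> = w0 m) \<and>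
     (\<forall>m. \<forall>\<omega>\<in>space P. continuous_on {t0..T} (\<lambda>t. W m t \<omega>)) \<and>
     (\<forall>(s::nat \<Rightarrow> real) k. t0 \<le> s 0 \<and> s k \<le> T \<and> (\<forall>j<k. s j < s (Suc j)) \<longrightarrow>
        prob_space.indep_vars P (\<lambda>_. borel)
          (\<lambda>(m, j) \<omega>. W m (s (Suc j)) \<omega> - W m (s j) \<omega>) (UNIV \<times> {..<k}) \<and>
        (\<forall>m. \<forall>j<k. distributed P lborel (\<lambda>\<omega>. W m (s (Suc j)) \<omega> - W m (s j) \<omega>)
                      (\<lambda>x. ennreal (normal_density 0 (sqrt (s (Suc j) - s j)) x))))"

end

theory Submission
  imports Defs
begin

(* Write l(w) = Lambda (w_0 - t0) + sum_m A_m (w_m - W_m(t0)), so that X(t) = e^l(W(t)) V0(t) and,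
   because W^n_0 = t_n and W^0 = W(t0), also Y_n = e^l(W^n) V0_n. With G(w, v) = f(e^l(w) v) the
   two expectations in the claim are those of G(W^n, V0_n) and of G(W(t_n), V0(t_n)), so the
   weak-order hypothesis applied to G gives the estimate, once G is shown to lie in C^{2(p+1)}_P.
   The A_m commute with each other and with Lambda, so e^l(w) factors as
   exp((w_0 - t0) Lambda) exp(sum_m (w_m - W_m(t0)) A_m). The second factor is orthogonal because
   the A_m are skew-symmetric, so it is bounded together with all its derivatives. The first one
   grows exponentially in w_0, but only w_0 in [t0, T] is ever evaluated, so it is replaced by an
   extension that continues with Taylor polynomials outside [t0, T]. *)

section \<open>Endomorphisms of a Euclidean space as a Banach algebra\<close>

text \<open>With composition as product the bounded linear endomorphisms form a Banach algebra, in which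
  the generic \<open>exp\<close> applies to matrices transported by \<open>endo_of_matrix\<close>.\<close>

typedef (overloaded) ('a::euclidean_space) endo = "UNIV :: ('a \<Rightarrow>\<^sub>L 'a) set"
  by simp

setup_lifting type_definition_endo

instantiation endo :: (euclidean_space) real_vector
begin
lift_definition zero_endo :: "'a endo" is 0 .
lift_definition plus_endo :: "'a endo \<Rightarrow> 'a endo \<Rightarrow> 'a endo" is "(+)" .
lift_definition minus_endo :: "'a endo \<Rightarrow> 'a endo \<Rightarrow> 'a endo" is "(-)" .
lift_definition uminus_endo :: "'a endo \<Rightarrow> 'a endo" is uminus .
lift_definition scaleR_endo :: "real \<Rightarrow> 'a endo \<Rightarrow> 'a endo" is scaleR .
instance by standard (transfer, simp add: algebra_simps)+
end

instantiation endo :: (euclidean_space) real_normed_vector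
begin
lift_definition norm_endo :: "'a endo \<Rightarrow> real" is norm .
definition sgn_endo :: "'a endo \<Rightarrow> 'a endo" where "sgn_endo x = x /\<^sub>R norm x"
definition dist_endo :: "'a endo \<Rightarrow> 'a endo \<Rightarrow> real" where "dist_endo x y = norm (x - y)"
definition uniformity_endo :: "('a endo \<times> 'a endo) filter" where
  "uniformity_endo = (INF e\<in>{0<..}. principal {(x, y). dist x y < e})"
definition open_endo :: "'a endo set \<Rightarrow> bool" where
  "open_endo U = (\<forall>x\<in>U. \<forall>\<^sub>F (x', y) in uniformity. x' = x \<longrightarrow> y \<in> U)"
instance
proof
  fix x y :: "'a endo" and r :: real
  show "norm x = 0 \<longleftrightarrow> x = 0"
    by transfer simp
  show "norm (x + y) \<le> norm x + norm y"
    by transfer (rule norm_triangle_ineq)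
  show "norm (r *\<^sub>R x) = \<bar>r\<bar> * norm x"
    by transfer simp
qed (simp_all add: sgn_endo_def dist_endo_def uniformity_endo_def open_endo_def)
end

lemma dist_Rep_endo: "dist (Rep_endo x) (Rep_endo y) = dist x y"
  by (simp add: dist_norm dist_endo_def) (transfer, simp)

instance endo :: (euclidean_space) banach
proof
  fix X :: "nat \<Rightarrow> 'a endo"
  assume "Cauchy X"
  then have "Cauchy (\<lambda>n. Rep_endo (X n))"
    by (simp add: Cauchy_def dist_Rep_endo)
  then obtain L where "(\<lambda>n. Rep_endo (X n)) \<longlonglongrightarrow> L"
    using Cauchy_convergent_iff convergent_def by blast
  then have "X \<longlonglongrightarrow> Abs_endo L"
    by (simp add: tendsto_iff dist_Rep_endo[symmetric] Abs_endo_inverse)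
  then show "convergent X"
    by (auto simp: convergent_def)
qed

instantiation endo :: (euclidean_space) real_normed_algebra_1
begin
lift_definition one_endo :: "'a endo" is id_blinfun .
lift_definition times_endo :: "'a endo \<Rightarrow> 'a endo \<Rightarrow> 'a endo" is "(o\<^sub>L)" .
instance
proof
  show "norm (1::'a endo) = 1"
    by transfer simp
  then show "(0::'a endo) \<noteq> 1"
    by (metis norm_zero zero_neq_one)
  show "norm (x * y) \<le> norm x * norm y" for x y :: "'a endo"
    by transfer (rule norm_blinfun_compose)
qed (transfer, rule blinfun_eqI,
     simp add: blinfun.add_left blinfun.add_right blinfun.scaleR_left blinfun.scaleR_right)+
end

lift_definition endo_apply :: "'a::euclidean_space endo \<Rightarrow> 'a \<Rightarrow> 'a" is blinfun_apply .

lemma endo_eqI: "(\<And>x. endo_apply a x = endo_apply b x) \<Longrightarrow> a = b"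
  by transfer (rule blinfun_eqI)

lemma endo_apply_mult: "endo_apply (a * b) x = endo_apply a (endo_apply b x)"
  by transfer simp

lemma endo_apply_one [simp]: "endo_apply 1 x = x"
  by transfer simp

lemma bounded_linear_endo_apply_left: "bounded_linear (\<lambda>a. endo_apply a x)"
proof (rule bounded_linear_intro[where K = "norm x"])
  show "endo_apply (a + b) x = endo_apply a x + endo_apply b x" for a b :: "'a endo"
    by transfer (simp add: blinfun.add_left)
  show "endo_apply (r *\<^sub>R a) x = r *\<^sub>R endo_apply a x" for r and a :: "'a endo"
    by transfer (simp add: blinfun.scaleR_left)
  show "norm (endo_apply a x) \<le> norm a * norm x" for a :: "'a endo"
    by transfer (rule norm_blinfun)
qed

lemma norm_endo_apply: "norm (endo_apply a x) \<le> norm a * norm x"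
  by transfer (rule norm_blinfun)

lemma norm_endo_le: "0 \<le> b \<Longrightarrow> (\<And>x. norm (endo_apply a x) \<le> b * norm x) \<Longrightarrow> norm a \<le> b"
  by transfer (rule norm_blinfun_bound)

lift_definition endo_of_matrix :: "real^'n^'n \<Rightarrow> (real^'n) endo" is "\<lambda>A. Blinfun ((*v) A)" .

lemma endo_apply_endo_of_matrix [simp]: "endo_apply (endo_of_matrix A) x = A *v x"
  by transfer (simp add: bounded_linear_Blinfun_apply)

lemma linear_endo_of_matrix: "linear endo_of_matrix"
  by (rule linearI; rule endo_eqI)
    (simp_all add: matrix_vector_mult_add_rdistrib scaleR_matrix_vector_assoc
      linear_add[OF bounded_linear.linear[OF bounded_linear_endo_apply_left]]
      linear_scale[OF bounded_linear.linear[OF bounded_linear_endo_apply_left]])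

lemma endo_of_matrix_mult: "endo_of_matrix (A ** B) = endo_of_matrix A * endo_of_matrix B"
  by (rule endo_eqI) (simp add: endo_apply_mult matrix_vector_mul_assoc)

lemma endo_of_matrix_mat_pow: "endo_of_matrix (mat_pow A k) = endo_of_matrix A ^ k"
proof (induction k)
  case 0
  show ?case
    by (rule endo_eqI) (simp add: mat_pow_def)
next
  case (Suc k)
  then show ?case
    by (simp add: mat_pow_def endo_of_matrix_mult)
qed

definition matrix_of_endo :: "(real^'n) endo \<Rightarrow> real^'n^'n" where
  "matrix_of_endo e = matrix (endo_apply e)"

lemma matrix_of_endo_of_matrix: "matrix_of_endo (endo_of_matrix A) = A"
proof -
  have "endo_apply (endo_of_matrix A) = (\<lambda>x. A *v x)"
    by (rule ext) simp
  then show ?thesis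
    by (simp add: matrix_of_endo_def)
qed

lemma endo_of_matrix_of_endo: "endo_of_matrix (matrix_of_endo e) = e"
proof -
  have "linear (endo_apply e)"
    by transfer (rule bounded_linear.linear[OF blinfun.bounded_linear_right])
  then show ?thesis
    by (intro endo_eqI) (simp add: matrix_of_endo_def matrix_works)
qed

lemma bounded_linear_matrix_of_endo:
  "bounded_linear (matrix_of_endo :: (real^'n) endo \<Rightarrow> real^'n^'n)"
proof (rule bounded_linear_intro[where K = "real CARD('n) * real CARD('n)"])
  fix a b :: "(real^'n) endo" and r :: real
  interpret apply_left: bounded_linear "\<lambda>a. endo_apply a x" for x
    by (rule bounded_linear_endo_apply_left)
  show "matrix_of_endo (a + b) = matrix_of_endo a + matrix_of_endo b"
    "matrix_of_endo (r *\<^sub>R a) = r *\<^sub>R matrix_of_endo a"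
    by (simp_all add: matrix_of_endo_def matrix_def vec_eq_iff apply_left.add apply_left.scaleR)
  have entry: "\<bar>matrix_of_endo a $ i $ j\<bar> \<le> norm a" for i j
  proof -
    have "\<bar>matrix_of_endo a $ i $ j\<bar> \<le> norm (endo_apply a (axis j 1))"
      unfolding matrix_of_endo_def matrix_def by (simp add: component_le_norm_cart)
    also have "\<dots> \<le> norm a"
      using norm_endo_apply[of a "axis j 1"] by (simp add: norm_axis_1)
    finally show ?thesis .
  qed
  have "norm (matrix_of_endo a) \<le> (\<Sum>i\<in>UNIV. norm (matrix_of_endo a $ i))"
    unfolding norm_vec_def[of "matrix_of_endo a"] by (rule L2_set_le_sum) simp
  also have "\<dots> \<le> (\<Sum>i\<in>UNIV. \<Sum>j\<in>UNIV. \<bar>matrix_of_endo a $ i $ j\<bar>)"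
    by (intro sum_mono norm_le_l1_cart)
  also have "\<dots> \<le> (\<Sum>i\<in>(UNIV::'n set). \<Sum>j\<in>(UNIV::'n set). norm a)"
    by (intro sum_mono entry)
  finally show "norm (matrix_of_endo a) \<le> norm a * (real CARD('n) * real CARD('n))"
    by (simp add: algebra_simps)
qed

lemma endo_of_matrix_mexp: "endo_of_matrix (mexp A) = exp (endo_of_matrix A)"
proof -
  interpret matrix_of_endo: bounded_linear matrix_of_endo
    by (rule bounded_linear_matrix_of_endo)
  have terms: "endo_of_matrix A ^ k /\<^sub>R fact k = endo_of_matrix ((1 / fact k) *\<^sub>R mat_pow A k)" for k
    by (simp add: linear_scale[OF linear_endo_of_matrix] endo_of_matrix_mat_pow divide_inverse_commute)
  have "summable (\<lambda>k. endo_of_matrix ((1 / fact k) *\<^sub>R mat_pow A k))"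
    using summable_exp_generic[of "endo_of_matrix A"] by (simp add: terms)
  from matrix_of_endo.suminf[OF this]
  have "matrix_of_endo (exp (endo_of_matrix A)) = mexp A"
    by (simp add: exp_def terms matrix_of_endo_of_matrix mexp_def)
  then show ?thesis
    by (metis endo_of_matrix_of_endo)
qed

lemma mexp_mult_vector: "mexp A *v x = endo_apply (exp (endo_of_matrix A)) x"
  by (simp flip: endo_of_matrix_mexp)

section \<open>Polynomial growth and the classes \<open>CkP\<close>\<close>

definition polynomial_growth :: "('a::real_normed_vector \<Rightarrow> real) \<Rightarrow> bool" where
  "polynomial_growth u \<longleftrightarrow> (\<exists>C n. \<forall>x. \<bar>u x\<bar> \<le> C * (1 + norm x) ^ n)"

lemma one_plus_powr_le_pow:
  fixes r k :: real
  assumes "0 \<le> r" "0 \<le> k"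
  shows "1 + r powr k \<le> 2 * (1 + r) ^ nat \<lceil>k\<rceil>"
proof -
  have "r powr k \<le> (1 + r) powr k"
    using assms by (intro powr_mono2) auto
  also have "\<dots> \<le> (1 + r) powr (real (nat \<lceil>k\<rceil>))"
    using assms by (intro powr_mono) auto
  also have "\<dots> = (1 + r) ^ nat \<lceil>k\<rceil>"
    using assms by (intro powr_realpow) auto
  moreover have "1 \<le> (1 + r) ^ nat \<lceil>k\<rceil>"
    using assms by simp
  ultimately show ?thesis
    by linarith
qed

lemma one_plus_pow_le_powr:
  fixes r :: real
  assumes "0 \<le> r"
  shows "(1 + r) ^ n \<le> 2 ^ n * (1 + r powr real n)"
proof (cases "r \<le> 1")
  case True
  then have "(1 + r) ^ n \<le> 2 ^ n"
    using assms by (intro power_mono) auto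
  also have "\<dots> \<le> 2 ^ n * (1 + r powr real n)"
    by simp
  finally show ?thesis .
next
  case False
  then have "(1 + r) ^ n \<le> (2 * r) ^ n"
    by (intro power_mono) auto
  also have "\<dots> = 2 ^ n * r powr real n"
    using False by (simp add: powr_realpow power_mult_distrib)
  also have "\<dots> \<le> 2 ^ n * (1 + r powr real n)"
    by simp
  finally show ?thesis .
qed

lemma poly_bounded_iff_polynomial_growth: "poly_bounded u \<longleftrightarrow> polynomial_growth u"
proof
  assume "poly_bounded u"
  then obtain K k where K: "0 \<le> K" "0 \<le> k" "\<And>x. \<bar>u x\<bar> \<le> K * (1 + norm x powr k)"
    unfolding poly_bounded_def by blast
  have "\<bar>u x\<bar> \<le> (2 * K) * (1 + norm x) ^ nat \<lceil>k\<rceil>" for x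
    using K(3)[of x] mult_left_mono[OF one_plus_powr_le_pow[of "norm x" k] K(1)] K(2) by simp
  then show "polynomial_growth u"
    unfolding polynomial_growth_def by blast
next
  assume "polynomial_growth u"
  then obtain C n where C: "\<And>x. \<bar>u x\<bar> \<le> C * (1 + norm x) ^ n"
    unfolding polynomial_growth_def by blast
  have "0 \<le> C"
    using C[of 0] by simp
  then have "\<bar>u x\<bar> \<le> (C * 2 ^ n) * (1 + norm x powr real n)" for x
    using C[of x] mult_left_mono[OF one_plus_pow_le_powr[of "norm x" n] \<open>0 \<le> C\<close>]
    by (simp add: mult.assoc)
  with \<open>0 \<le> C\<close> show "poly_bounded u"
    unfolding poly_bounded_def by (intro exI[of _ "C * 2 ^ n"] exI[of _ "real n"]) simp
qed

lemma polynomial_growthE: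
  assumes "polynomial_growth u"
  obtains C n where "0 \<le> C" "\<And>x. \<bar>u x\<bar> \<le> C * (1 + norm x) ^ n"
proof -
  obtain C n where C: "\<And>x. \<bar>u x\<bar> \<le> C * (1 + norm x) ^ n"
    using assms unfolding polynomial_growth_def by blast
  moreover have "0 \<le> C"
    using C[of 0] by simp
  ultimately show ?thesis
    using that by blast
qed

lemma polynomial_growth_le:
  assumes "polynomial_growth v" "\<And>x. \<bar>u x\<bar> \<le> v x"
  shows "polynomial_growth u"
proof -
  obtain C n where "\<And>x. \<bar>v x\<bar> \<le> C * (1 + norm x) ^ n"
    by (rule polynomial_growthE[OF assms(1)]) auto
  then have "\<bar>u x\<bar> \<le> C * (1 + norm x) ^ n" for x
    using assms(2)[of x] by (meson abs_ge_self order_trans)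
  then show ?thesis
    unfolding polynomial_growth_def by blast
qed

lemma polynomial_growth_const: "polynomial_growth (\<lambda>x. c)"
  unfolding polynomial_growth_def by (intro exI[of _ "\<bar>c\<bar>"] exI[of _ 0]) simp

lemma polynomial_growth_abs: "polynomial_growth u \<Longrightarrow> polynomial_growth (\<lambda>x. \<bar>u x\<bar>)"
  unfolding polynomial_growth_def by simp

lemma polynomial_growth_add:
  assumes "polynomial_growth u" "polynomial_growth v"
  shows "polynomial_growth (\<lambda>x. u x + v x)"
proof -
  obtain C n where C: "0 \<le> C" "\<And>x. \<bar>u x\<bar> \<le> C * (1 + norm x) ^ n"
    by (rule polynomial_growthE[OF assms(1)]) auto
  obtain D m where D: "0 \<le> D" "\<And>x. \<bar>v x\<bar> \<le> D * (1 + norm x) ^ m"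
    by (rule polynomial_growthE[OF assms(2)]) auto
  have "\<bar>u x + v x\<bar> \<le> (C + D) * (1 + norm x) ^ max n m" for x
  proof -
    have n: "(1 + norm x) ^ n \<le> (1 + norm x) ^ max n m"
      and m: "(1 + norm x) ^ m \<le> (1 + norm x) ^ max n m"
      by (intro power_increasing; simp)+
    have "\<bar>u x\<bar> \<le> C * (1 + norm x) ^ max n m" "\<bar>v x\<bar> \<le> D * (1 + norm x) ^ max n m"
      by (rule order_trans[OF C(2) mult_left_mono[OF n C(1)]],
          rule order_trans[OF D(2) mult_left_mono[OF m D(1)]])
    then show ?thesis
      using abs_triangle_ineq[of "u x" "v x"] by (simp add: distrib_right)
  qed
  then show ?thesis
    unfolding polynomial_growth_def by blast
qed

lemma polynomial_growth_mult:
  assumes "polynomial_growth u" "polynomial_growth v"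
  shows "polynomial_growth (\<lambda>x. u x * v x)"
proof -
  obtain C n where C: "0 \<le> C" "\<And>x. \<bar>u x\<bar> \<le> C * (1 + norm x) ^ n"
    by (rule polynomial_growthE[OF assms(1)]) auto
  obtain D m where D: "0 \<le> D" "\<And>x. \<bar>v x\<bar> \<le> D * (1 + norm x) ^ m"
    by (rule polynomial_growthE[OF assms(2)]) auto
  have "\<bar>u x * v x\<bar> \<le> (C * (1 + norm x) ^ n) * (D * (1 + norm x) ^ m)" for x
    unfolding abs_mult by (intro mult_mono C D) (auto simp: C(1))
  then have "\<bar>u x * v x\<bar> \<le> (C * D) * (1 + norm x) ^ (n + m)" for x
    by (simp add: power_add algebra_simps)
  then show ?thesis
    unfolding polynomial_growth_def by blast
qed

lemma polynomial_growth_sum: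
  "finite S \<Longrightarrow> (\<And>i. i \<in> S \<Longrightarrow> polynomial_growth (f i)) \<Longrightarrow> polynomial_growth (\<lambda>x. \<Sum>i\<in>S. f i x)"
  by (induction S rule: finite_induct) (auto intro: polynomial_growth_add polynomial_growth_const)

lemma polynomial_growth_bounded_linear: "bounded_linear l \<Longrightarrow> polynomial_growth l"
proof -
  assume "bounded_linear l"
  then obtain K where K: "\<And>x. norm (l x) \<le> norm x * K" "0 < K"
    using bounded_linear.pos_bounded by blast
  have "\<bar>l x\<bar> \<le> K * (1 + norm x) ^ 1" for x
  proof -
    have "\<bar>l x\<bar> \<le> K * norm x"
      using K(1)[of x] by (simp add: mult.commute)
    also have "\<dots> \<le> K * (1 + norm x)"
      using K(2) by simp
    finally show ?thesis
      by simp
  qed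
  then show "polynomial_growth l"
    unfolding polynomial_growth_def by blast
qed

lemma polynomial_growth_compose:
  assumes "polynomial_growth u" "polynomial_growth (\<lambda>z. norm (\<Phi> z))"
  shows "polynomial_growth (\<lambda>z. u (\<Phi> z))"
proof -
  obtain C n where C: "0 \<le> C" "\<And>x. \<bar>u x\<bar> \<le> C * (1 + norm x) ^ n"
    by (rule polynomial_growthE[OF assms(1)]) auto
  obtain D m where D: "0 \<le> D" "\<And>z. \<bar>norm (\<Phi> z)\<bar> \<le> D * (1 + norm z) ^ m"
    by (rule polynomial_growthE[OF assms(2)]) auto
  have "\<bar>u (\<Phi> z)\<bar> \<le> (C * (1 + D) ^ n) * (1 + norm z) ^ (m * n)" for z
  proof -
    have "1 \<le> (1 + norm z) ^ m"
      by simp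
    moreover have "(1 + D) * (1 + norm z) ^ m = (1 + norm z) ^ m + D * (1 + norm z) ^ m"
      by (simp add: distrib_right)
    ultimately have "1 + norm (\<Phi> z) \<le> (1 + D) * (1 + norm z) ^ m"
      using D(2)[of z] by linarith
    then have "(1 + norm (\<Phi> z)) ^ n \<le> ((1 + D) * (1 + norm z) ^ m) ^ n"
      by (intro power_mono) auto
    then have "(1 + norm (\<Phi> z)) ^ n \<le> (1 + D) ^ n * (1 + norm z) ^ (m * n)"
      by (simp add: power_mult_distrib power_mult)
    from mult_left_mono[OF this C(1)] C(2)[of "\<Phi> z"] show ?thesis
      by (simp add: mult.assoc)
  qed
  then show ?thesis
    unfolding polynomial_growth_def by blast
qed

lemma polynomial_growth_norm_euclidean:
  fixes \<Phi> :: "'a::real_normed_vector \<Rightarrow> 'b::euclidean_space"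
  assumes "\<And>b. b \<in> Basis \<Longrightarrow> polynomial_growth (\<lambda>z. \<Phi> z \<bullet> b)"
  shows "polynomial_growth (\<lambda>z. norm (\<Phi> z))"
proof -
  have "polynomial_growth (\<lambda>z. \<Sum>b\<in>Basis. \<bar>\<Phi> z \<bullet> b\<bar>)"
    by (intro polynomial_growth_sum polynomial_growth_abs assms) auto
  then show ?thesis
    by (rule polynomial_growth_le) (simp add: norm_le_l1)
qed

lemma CkP_D:
  assumes "u \<in> CkP k"
  shows "continuous_on UNIV u" "polynomial_growth u"
proof -
  have "continuous_on UNIV u \<and> poly_bounded u"
  proof (cases k)
    case (Suc n)
    from assms[unfolded Suc] show ?thesis
      unfolding CkP.simps(2)[of n] mem_Collect_eq by blast
  qed (use assms in simp)
  then show "continuous_on UNIV u" "polynomial_growth u"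
    by (simp_all add: poly_bounded_iff_polynomial_growth)
qed

lemma CkP_SucD:
  assumes "u \<in> CkP (Suc k)"
  shows "(u has_derivative frechet_derivative u (at x)) (at x)"
    and "\<And>i. i \<in> Basis \<Longrightarrow> (\<lambda>x. frechet_derivative u (at x) i) \<in> CkP k"
  using assms frechet_derivative_works unfolding CkP.simps(2)[of k] mem_Collect_eq by blast+

lemma CkP_SucI:
  assumes "polynomial_growth u" "\<And>x. (u has_derivative D x) (at x)"
    and "\<And>i. i \<in> Basis \<Longrightarrow> (\<lambda>x. D x i) \<in> CkP k"
  shows "u \<in> CkP (Suc k)"
proof -
  have "frechet_derivative u (at x) = D x" for x
    using frechet_derivative_at[OF assms(2)] by simp
  moreover have "continuous_on UNIV u"
    using assms(2) by (meson differentiable_def differentiable_imp_continuous_on differentiable_on_def)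
  moreover have "\<forall>x. u differentiable (at x)"
    using assms(2) differentiable_def by blast
  ultimately show ?thesis
    using assms(1,3) unfolding CkP.simps(2)[of k] mem_Collect_eq poly_bounded_iff_polynomial_growth
    by simp
qed

lemma CkP_Suc_subset: "u \<in> CkP (Suc k) \<Longrightarrow> u \<in> CkP k"
proof (induction k arbitrary: u)
  case (Suc k)
  then show ?case
    unfolding CkP.simps(2)[of "Suc k"] CkP.simps(2)[of k] mem_Collect_eq by blast
qed simp

lemma CkP_const: "(\<lambda>x. c) \<in> CkP k"
proof (induction k arbitrary: c)
  case 0
  show ?case
    by (simp add: poly_bounded_iff_polynomial_growth polynomial_growth_const)
next
  case (Suc k)
  show ?case
    by (rule CkP_SucI[where D = "\<lambda>x h. 0"]) (auto simp: polynomial_growth_const Suc)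
qed

lemma CkP_add: "u \<in> CkP k \<Longrightarrow> v \<in> CkP k \<Longrightarrow> (\<lambda>x. u x + v x) \<in> CkP k"
proof (induction k arbitrary: u v)
  case 0
  then show ?case
    by (auto simp: poly_bounded_iff_polynomial_growth intro: polynomial_growth_add continuous_on_add)
next
  case (Suc k)
  show ?case
  proof (rule CkP_SucI)
    show "polynomial_growth (\<lambda>x. u x + v x)"
      using Suc.prems by (intro polynomial_growth_add CkP_D)
    show "((\<lambda>x. u x + v x) has_derivative
        (\<lambda>h. frechet_derivative u (at x) h + frechet_derivative v (at x) h)) (at x)" for x
      using Suc.prems by (intro has_derivative_add CkP_SucD(1))
    show "(\<lambda>x. frechet_derivative u (at x) i + frechet_derivative v (at x) i) \<in> CkP k"
      if "i \<in> Basis" for i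
      using Suc.prems that by (intro Suc.IH CkP_SucD(2))
  qed
qed

lemma CkP_mult: "u \<in> CkP k \<Longrightarrow> v \<in> CkP k \<Longrightarrow> (\<lambda>x. u x * v x) \<in> CkP k"
proof (induction k arbitrary: u v)
  case 0
  then show ?case
    by (auto simp: poly_bounded_iff_polynomial_growth intro: polynomial_growth_mult continuous_on_mult)
next
  case (Suc k)
  show ?case
  proof (rule CkP_SucI)
    show "polynomial_growth (\<lambda>x. u x * v x)"
      using Suc.prems by (intro polynomial_growth_mult CkP_D)
    show "((\<lambda>x. u x * v x) has_derivative
        (\<lambda>h. u x * frechet_derivative v (at x) h + frechet_derivative u (at x) h * v x)) (at x)" for x
      using Suc.prems by (intro has_derivative_mult CkP_SucD(1))
    show "(\<lambda>x. u x * frechet_derivative v (at x) i + frechet_derivative u (at x) i * v x) \<in> CkP k"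
      if "i \<in> Basis" for i
      using Suc.prems that CkP_Suc_subset[OF Suc.prems(1)] CkP_Suc_subset[OF Suc.prems(2)]
      by (intro CkP_add Suc.IH CkP_SucD(2))
  qed
qed

lemma CkP_sum: "finite S \<Longrightarrow> (\<And>i. i \<in> S \<Longrightarrow> f i \<in> CkP k) \<Longrightarrow> (\<lambda>x. \<Sum>i\<in>S. f i x) \<in> CkP k"
  by (induction S rule: finite_induct) (auto intro: CkP_add CkP_const)

lemma CkP_bounded_linear: "bounded_linear l \<Longrightarrow> l \<in> CkP k"
proof (induction k)
  case 0
  then show ?case
    by (auto simp: poly_bounded_iff_polynomial_growth
        intro: polynomial_growth_bounded_linear linear_continuous_on)
next
  case (Suc k)
  then show ?case
    by (intro CkP_SucI[where D = "\<lambda>x. l"] polynomial_growth_bounded_linear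
        bounded_linear_imp_has_derivative CkP_const)
qed

lemma CkP_compose_growth:
  fixes \<Phi> :: "'a::euclidean_space \<Rightarrow> 'b::euclidean_space"
  assumes "\<And>b. b \<in> Basis \<Longrightarrow> (\<lambda>z. \<Phi> z \<bullet> b) \<in> CkP k" "u \<in> CkP k"
  shows "polynomial_growth (\<lambda>z. u (\<Phi> z))"
proof (rule polynomial_growth_compose[of u \<Phi>])
  show "polynomial_growth u"
    using assms(2) by (rule CkP_D(2))
  show "polynomial_growth (\<lambda>z. norm (\<Phi> z))"
    using assms(1) CkP_D(2) by (intro polynomial_growth_norm_euclidean) blast
qed

lemma CkP_compose:
  fixes \<Phi> :: "'a::euclidean_space \<Rightarrow> 'b::euclidean_space"
  assumes "\<And>b. b \<in> Basis \<Longrightarrow> (\<lambda>z. \<Phi> z \<bullet> b) \<in> CkP k" "u \<in> CkP k"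
  shows "(\<lambda>z. u (\<Phi> z)) \<in> CkP k"
  using assms
proof (induction k arbitrary: u)
  case 0
  have "continuous_on UNIV (\<lambda>z. \<Sum>b\<in>Basis. (\<Phi> z \<bullet> b) *\<^sub>R b)"
    using 0 CkP_D(1) by (intro continuous_on_sum continuous_on_scaleR continuous_on_const) blast+
  then have "continuous_on UNIV \<Phi>"
    by (simp add: euclidean_representation)
  then have "continuous_on UNIV (\<lambda>z. u (\<Phi> z))"
    by (rule continuous_on_compose2[OF CkP_D(1)[OF "0.prems"(2)]]) simp
  with CkP_compose_growth[OF 0] show ?case
    by (simp add: poly_bounded_iff_polynomial_growth)
next
  case (Suc k)
  define D\<Phi> where "D\<Phi> z h = (\<Sum>b\<in>Basis. frechet_derivative (\<lambda>z. \<Phi> z \<bullet> b) (at z) h *\<^sub>R b)" for z h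
  have "((\<lambda>z. \<Sum>b\<in>Basis. (\<Phi> z \<bullet> b) *\<^sub>R b) has_derivative D\<Phi> z) (at z)" for z
    unfolding D\<Phi>_def using Suc.prems(1)
    by (intro has_derivative_sum has_derivative_scaleR_left CkP_SucD(1))
  then have \<Phi>_deriv: "(\<Phi> has_derivative D\<Phi> z) (at z)" for z
    by (simp add: euclidean_representation)
  have "linear (frechet_derivative u (at y))" for y
    using has_derivative_linear[OF CkP_SucD(1)[OF Suc.prems(2)]] .
  then have chain: "frechet_derivative u (at (\<Phi> z)) (D\<Phi> z h) =
      (\<Sum>b\<in>Basis. frechet_derivative (\<lambda>z. \<Phi> z \<bullet> b) (at z) h * frechet_derivative u (at (\<Phi> z)) b)"
    for z h
    by (simp add: D\<Phi>_def linear_sum linear_scale)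
  show ?case
  proof (rule CkP_SucI)
    show "polynomial_growth (\<lambda>z. u (\<Phi> z))"
      by (rule CkP_compose_growth[OF Suc.prems])
    show "((\<lambda>z. u (\<Phi> z)) has_derivative (\<lambda>h. \<Sum>b\<in>Basis.
        frechet_derivative (\<lambda>z. \<Phi> z \<bullet> b) (at z) h * frechet_derivative u (at (\<Phi> z)) b)) (at z)" for z
      using has_derivative_compose[OF \<Phi>_deriv CkP_SucD(1)[OF Suc.prems(2)]] by (simp add: chain)
    show "(\<lambda>z. \<Sum>b\<in>Basis. frechet_derivative (\<lambda>z. \<Phi> z \<bullet> b) (at z) i
        * frechet_derivative u (at (\<Phi> z)) b) \<in> CkP k" if "i \<in> Basis" for i
    proof (rule CkP_sum)
      fix b :: 'b
      assume "b \<in> Basis"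
      have "(\<lambda>z. frechet_derivative (\<lambda>z. \<Phi> z \<bullet> b) (at z) i) \<in> CkP k"
        using Suc.prems(1)[OF \<open>b \<in> Basis\<close>] that by (rule CkP_SucD(2))
      moreover have "(\<lambda>z. frechet_derivative u (at (\<Phi> z)) b) \<in> CkP k"
        by (rule Suc.IH[OF CkP_Suc_subset[OF Suc.prems(1)] CkP_SucD(2)[OF Suc.prems(2) \<open>b \<in> Basis\<close>]])
      ultimately show "(\<lambda>z. frechet_derivative (\<lambda>z. \<Phi> z \<bullet> b) (at z) i
          * frechet_derivative u (at (\<Phi> z)) b) \<in> CkP k"
        by (rule CkP_mult)
    qed simp
  qed
qed

section \<open>Exponentials in a Banach algebra\<close>

lemma exp_mult_commute:
  fixes x y :: "'a::{real_normed_algebra_1,banach}"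
  assumes "x * y = y * x"
  shows "exp x * y = y * exp x"
proof -
  have summable: "summable (\<lambda>n. x ^ n /\<^sub>R fact n)"
    by (rule summable_exp_generic)
  have "exp x * y = (\<Sum>n. x ^ n /\<^sub>R fact n * y)"
    unfolding exp_def by (rule suminf_mult2[OF summable])
  also have "\<dots> = (\<Sum>n. y * (x ^ n /\<^sub>R fact n))"
    using power_commuting_commutes[OF assms] by (simp add: mult_scaleR_left mult_scaleR_right)
  also have "\<dots> = y * exp x"
    unfolding exp_def by (rule suminf_mult[OF summable])
  finally show ?thesis .
qed

lemma has_derivative_exp_sum_scaleR:
  fixes A :: "'i \<Rightarrow> 'a::{real_normed_algebra_1,banach}"
  assumes "finite S" and commute: "\<And>i j. A i * A j = A j * A i"
    and deriv: "\<And>i. (a i has_derivative a' i) (at z)"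
  shows "((\<lambda>z. exp (\<Sum>i\<in>S. a i z *\<^sub>R A i)) has_derivative
          (\<lambda>h. (\<Sum>i\<in>S. a' i h *\<^sub>R A i) * exp (\<Sum>i\<in>S. a i z *\<^sub>R A i))) (at z)"
  using \<open>finite S\<close>
proof (induction S rule: finite_induct)
  case (insert j S)
  define E where "E z = exp (a j z *\<^sub>R A j)" for z
  define F where "F z = exp (\<Sum>i\<in>S. a i z *\<^sub>R A i)" for z
  define D where "D h = (\<Sum>i\<in>S. a' i h *\<^sub>R A i)" for h
  have commutes_j: "(r *\<^sub>R A j) * (\<Sum>i\<in>S. b i *\<^sub>R A i) = (\<Sum>i\<in>S. b i *\<^sub>R A i) * (r *\<^sub>R A j)" for r b
    by (simp add: sum_distrib_left sum_distrib_right commute scaleR_sum_right mult.commute)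
  have split: "exp (\<Sum>i\<in>insert j S. a i z *\<^sub>R A i) = E z * F z" for z
    using insert.hyps by (simp add: E_def F_def exp_add_commuting[OF commutes_j])
  have "((\<lambda>t. exp (t *\<^sub>R A j)) has_derivative (\<lambda>h. h *\<^sub>R (A j * E z))) (at (a j z))"
    using exp_scaleR_has_vector_derivative_left[of "A j" "a j z"]
    by (simp add: has_vector_derivative_def E_def)
  from has_derivative_compose[OF deriv this]
  have "(E has_derivative (\<lambda>h. a' j h *\<^sub>R (A j * E z))) (at z)"
    by (simp add: E_def[abs_def])
  from has_derivative_mult[OF this insert.IH[folded F_def D_def]]
  have "((\<lambda>z. E z * F z) has_derivative (\<lambda>h. E z * (D h * F z) + a' j h *\<^sub>R (A j * E z) * F z)) (at z)" .
  moreover have "E z * (D h * F z) + a' j h *\<^sub>R (A j * E z) * F z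
      = (\<Sum>i\<in>insert j S. a' i h *\<^sub>R A i) * (E z * F z)" for h
  proof -
    have "E z * D h = D h * E z"
      unfolding E_def D_def by (rule exp_mult_commute[OF commutes_j])
    then show ?thesis
      using insert.hyps by (simp add: D_def distrib_right mult.assoc mult_scaleR_left flip: mult.assoc)
  qed
  ultimately show ?case
    by (simp add: split)
qed simp

lemma norm_exp_le_one_if_skew:
  fixes S :: "'a::euclidean_space endo"
  assumes skew: "\<And>v. v \<bullet> endo_apply S v = 0"
  shows "norm (exp S) \<le> 1"
proof (rule norm_endo_le)
  fix x :: 'a
  define y where "y t = endo_apply (exp (t *\<^sub>R S)) x" for t
  have y_deriv: "(y has_derivative (\<lambda>h. h *\<^sub>R endo_apply S (y t))) (at t)" for t
  proof -
    have "((\<lambda>t. exp (t *\<^sub>R S)) has_derivative (\<lambda>h. h *\<^sub>R (S * exp (t *\<^sub>R S)))) (at t)"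
      using exp_scaleR_has_vector_derivative_left by (simp add: has_vector_derivative_def)
    from has_derivative_compose[OF this bounded_linear_imp_has_derivative[OF bounded_linear_endo_apply_left]]
    show ?thesis
      unfolding y_def[abs_def]
      by (simp add: endo_apply_mult linear_scale[OF bounded_linear.linear[OF bounded_linear_endo_apply_left]])
  qed
  have "((\<lambda>t. y t \<bullet> y t) has_real_derivative 0) (at t)" for t
    using has_derivative_inner[OF y_deriv y_deriv, of t] skew[of "y t"]
    by (simp add: has_field_derivative_def inner_commute lambda_zero)
  then have "y 1 \<bullet> y 1 = y 0 \<bullet> y 0"
    using DERIV_isconst_all[of "\<lambda>t. y t \<bullet> y t"] by blast
  then show "norm (endo_apply (exp S) x) \<le> 1 * norm x"
    by (simp add: y_def norm_eq_sqrt_inner)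
qed simp

section \<open>A polynomially bounded extension of the exponential\<close>

definition exp_taylor :: "nat \<Rightarrow> 'a::{real_normed_algebra_1,banach} \<Rightarrow> real \<Rightarrow> 'a" where
  "exp_taylor m L u = (\<Sum>i\<le>m. (u ^ i / fact i) *\<^sub>R L ^ i)"

lemma exp_taylor_0_right [simp]: "exp_taylor m L 0 = 1"
  by (induction m) (simp_all add: exp_taylor_def)

lemma has_vector_derivative_exp_taylor:
  "((\<lambda>u. exp_taylor (Suc m) L u) has_vector_derivative L * exp_taylor m L u) (at u)"
proof (induction m)
  case 0
  show ?case
    by (auto simp: exp_taylor_def intro!: derivative_eq_intros)
next
  case (Suc m)
  have "((\<lambda>u. u ^ Suc (Suc m) / fact (Suc (Suc m))) has_real_derivative
      real (Suc (Suc m)) * u ^ Suc m / fact (Suc (Suc m))) (at u)"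
    using DERIV_pow[of "Suc (Suc m)" u] by (intro DERIV_cdivide) simp
  moreover have "real (Suc (Suc m)) * u ^ Suc m / fact (Suc (Suc m)) = u ^ Suc m / fact (Suc m)"
    by (simp add: fact_Suc[of "Suc m"] field_simps del: of_nat_Suc)
  ultimately have "((\<lambda>u. u ^ Suc (Suc m) / fact (Suc (Suc m))) has_real_derivative
      u ^ Suc m / fact (Suc m)) (at u)"
    by simp
  from has_vector_derivative_add[OF Suc has_vector_derivative_scaleR[OF this has_vector_derivative_const]]
  show ?case
    by (simp add: exp_taylor_def distrib_left mult_scaleR_right)
qed

lemma norm_exp_taylor_le:
  "norm (exp_taylor m L u) \<le> real (Suc m) * (1 + norm L) ^ m * (1 + \<bar>u\<bar>) ^ m"
proof -
  have summand: "norm ((u ^ i / fact i) *\<^sub>R L ^ i) \<le> (1 + norm L) ^ m * (1 + \<bar>u\<bar>) ^ m" if "i \<le> m" for i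
  proof -
    have "\<bar>u\<bar> ^ i / fact i \<le> \<bar>u\<bar> ^ i"
      by (simp add: divide_le_eq fact_ge_1 mult_le_cancel_left1)
    also have "\<dots> \<le> (1 + \<bar>u\<bar>) ^ i"
      by (intro power_mono) auto
    also have "\<dots> \<le> (1 + \<bar>u\<bar>) ^ m"
      using that by (intro power_increasing) auto
    finally have u: "\<bar>u\<bar> ^ i / fact i \<le> (1 + \<bar>u\<bar>) ^ m" .
    have "norm (L ^ i) \<le> norm L ^ i"
      by (rule norm_power_ineq)
    also have "\<dots> \<le> (1 + norm L) ^ i"
      by (intro power_mono) auto
    also have "\<dots> \<le> (1 + norm L) ^ m"
      using that by (intro power_increasing) auto
    finally have "\<bar>u\<bar> ^ i / fact i * norm (L ^ i) \<le> (1 + \<bar>u\<bar>) ^ m * (1 + norm L) ^ m"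
      using u by (intro mult_mono) auto
    then show ?thesis
      by (simp add: power_abs mult.commute)
  qed
  have "norm (exp_taylor m L u) \<le> (\<Sum>i\<le>m. norm ((u ^ i / fact i) *\<^sub>R L ^ i))"
    unfolding exp_taylor_def by (rule norm_sum)
  also have "\<dots> \<le> (\<Sum>i\<le>m. (1 + norm L) ^ m * (1 + \<bar>u\<bar>) ^ m)"
    using summand by (intro sum_mono) auto
  finally show ?thesis
    by simp
qed

text \<open>Continuing \<open>s \<mapsto> exp ((s - t0) L)\<close> beyond \<open>[t0, T]\<close> by its Taylor polynomials of
  degree \<open>m\<close> at the endpoints gives a \<open>C\<^sup>m\<close> function of polynomial growth.\<close>

definition exp_extension :: "nat \<Rightarrow> 'a::{real_normed_algebra_1,banach} \<Rightarrow> real \<Rightarrow> real \<Rightarrow> real \<Rightarrow> 'a" where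
  "exp_extension m L t0 T s =
    exp_taylor m L (s - max t0 (min T s)) * exp ((max t0 (min T s) - t0) *\<^sub>R L)"

lemma exp_extension_left: "s \<le> t0 \<Longrightarrow> t0 \<le> T \<Longrightarrow> exp_extension m L t0 T s = exp_taylor m L (s - t0)"
  by (simp add: exp_extension_def)

lemma exp_extension_inside:
  "t0 \<le> s \<Longrightarrow> s \<le> T \<Longrightarrow> exp_extension m L t0 T s = exp ((s - t0) *\<^sub>R L)"
  by (simp add: exp_extension_def)

lemma exp_extension_right:
  "T \<le> s \<Longrightarrow> t0 \<le> T \<Longrightarrow> exp_extension m L t0 T s = exp_taylor m L (s - T) * exp ((T - t0) *\<^sub>R L)"
  by (simp add: exp_extension_def)

lemma has_vector_derivative_glue:
  fixes a b c :: real
  assumes "(g has_vector_derivative D) (at a)" "(h has_vector_derivative D) (at a)"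
    and "\<And>x. x \<in> {b..a} \<Longrightarrow> f x = g x" "\<And>x. x \<in> {a..c} \<Longrightarrow> f x = h x"
    and "b < a" "a < c"
  shows "(f has_vector_derivative D) (at a)"
proof -
  have "(f has_vector_derivative D) (at a within {b..a})"
    using has_vector_derivative_at_within[OF assms(1)]
    by (rule has_vector_derivative_transform[rotated 2]) (use assms in auto)
  moreover have "(f has_vector_derivative D) (at a within {a..c})"
    using has_vector_derivative_at_within[OF assms(2)]
    by (rule has_vector_derivative_transform[rotated 2]) (use assms in auto)
  ultimately have "(f has_vector_derivative D) (at a within {b..a} \<union> {a..c})"
    unfolding has_vector_derivative_def has_derivative_at_within Lim_within_Un by blast
  moreover have "{b..a} \<union> {a..c} = {b..c}"
    using assms by auto
  ultimately show ?thesis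
    using assms at_within_Icc_at[of b a c] by simp
qed

lemma has_vector_derivative_exp_extension:
  fixes L :: "'a::{real_normed_algebra_1,banach}"
  assumes "t0 < T"
  shows "(exp_extension (Suc m) L t0 T has_vector_derivative L * exp_extension m L t0 T s) (at s)"
proof -
  have shift: "((\<lambda>u. u - c) has_vector_derivative 1) (at s)" for c :: real
    by (auto intro!: derivative_eq_intros)
  have taylor: "((\<lambda>u. exp_taylor (Suc m) L (u - c)) has_vector_derivative L * exp_taylor m L (s - c)) (at s)"
    for c
    using vector_diff_chain_at[OF shift has_vector_derivative_exp_taylor] by (simp add: o_def)
  let ?D = "L * exp_extension m L t0 T s"
  have left: "((\<lambda>u. exp_taylor (Suc m) L (u - t0)) has_vector_derivative ?D) (at s)" if "s \<le> t0"
    using taylor[where c = t0] that assms by (simp add: exp_extension_left)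
  have inside: "((\<lambda>u. exp ((u - t0) *\<^sub>R L)) has_vector_derivative ?D) (at s)" if "t0 \<le> s" "s \<le> T"
    using vector_diff_chain_at[OF shift exp_scaleR_has_vector_derivative_left] that
    by (simp add: o_def exp_extension_inside)
  have right: "((\<lambda>u. exp_taylor (Suc m) L (u - T) * exp ((T - t0) *\<^sub>R L)) has_vector_derivative ?D) (at s)"
    if "T \<le> s"
    using has_vector_derivative_mult[OF taylor[where c = T] has_vector_derivative_const] that assms
    by (simp add: exp_extension_right mult.assoc)
  consider "s < t0" | "s = t0" | "t0 < s" "s < T" | "s = T" | "T < s"
    by linarith
  then show ?thesis
  proof cases
    case 1
    then show ?thesis
      using assms by (intro has_vector_derivative_glue[OF left left, where b = "s - 1" and c = t0])
        (auto simp: exp_extension_left)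
  next
    case 2
    then show ?thesis
      using assms by (intro has_vector_derivative_glue[OF left inside, where b = "s - 1" and c = T])
        (auto simp: exp_extension_left exp_extension_inside)
  next
    case 3
    then show ?thesis
      using assms by (intro has_vector_derivative_glue[OF inside inside, where b = t0 and c = T])
        (auto simp: exp_extension_inside)
  next
    case 4
    then show ?thesis
      using assms by (intro has_vector_derivative_glue[OF inside right, where b = t0 and c = "s + 1"])
        (auto simp: exp_extension_inside exp_extension_right mult.assoc)
  next
    case 5
    then show ?thesis
      using assms by (intro has_vector_derivative_glue[OF right right, where b = T and c = "s + 1"])
        (auto simp: exp_extension_right mult.assoc)
  qed
qed

lemma polynomial_growth_exp_extension:
  fixes L :: "'a::{real_normed_algebra_1,banach}"
  assumes "t0 \<le> T"
  shows "polynomial_growth (\<lambda>s. norm (exp_extension m L t0 T s))"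
proof -
  define c where "c = \<bar>t0\<bar> + \<bar>T\<bar>"
  define B where "B = real (Suc m) * (1 + norm L) ^ m * (1 + c) ^ m * exp ((T - t0) * norm L)"
  have "norm (exp_extension m L t0 T s) \<le> B * (1 + norm s) ^ m" for s
  proof -
    define \<theta> where "\<theta> = max t0 (min T s)"
    have \<theta>: "t0 \<le> \<theta>" "\<theta> \<le> T" "\<bar>\<theta>\<bar> \<le> c"
      using assms by (auto simp: \<theta>_def c_def)
    have "0 \<le> c * \<bar>s\<bar>"
      by (simp add: c_def)
    moreover have "(1 + c) * (1 + \<bar>s\<bar>) = 1 + c + \<bar>s\<bar> + c * \<bar>s\<bar>"
      by (simp add: algebra_simps)
    ultimately have "1 + \<bar>s - \<theta>\<bar> \<le> (1 + c) * (1 + \<bar>s\<bar>)"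
      using \<theta>(3) abs_triangle_ineq4[of s \<theta>] by linarith
    then have "(1 + \<bar>s - \<theta>\<bar>) ^ m \<le> ((1 + c) * (1 + \<bar>s\<bar>)) ^ m"
      by (intro power_mono) auto
    then have pow: "(1 + \<bar>s - \<theta>\<bar>) ^ m \<le> (1 + c) ^ m * (1 + \<bar>s\<bar>) ^ m"
      by (simp add: power_mult_distrib)
    have "norm (exp_taylor m L (s - \<theta>)) \<le> real (Suc m) * (1 + norm L) ^ m * (1 + \<bar>s - \<theta>\<bar>) ^ m"
      by (rule norm_exp_taylor_le)
    also have "\<dots> \<le> real (Suc m) * (1 + norm L) ^ m * ((1 + c) ^ m * (1 + \<bar>s\<bar>) ^ m)"
      using pow by (intro mult_left_mono) auto
    finally have taylor: "norm (exp_taylor m L (s - \<theta>))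
        \<le> real (Suc m) * (1 + norm L) ^ m * ((1 + c) ^ m * (1 + \<bar>s\<bar>) ^ m)" .
    have "norm (exp ((\<theta> - t0) *\<^sub>R L)) \<le> exp (norm ((\<theta> - t0) *\<^sub>R L))"
      by (rule norm_exp)
    also have "\<dots> \<le> exp ((T - t0) * norm L)"
      using \<theta> by (simp add: mult_right_mono)
    finally have exp: "norm (exp ((\<theta> - t0) *\<^sub>R L)) \<le> exp ((T - t0) * norm L)" .
    have "norm (exp_extension m L t0 T s) \<le> norm (exp_taylor m L (s - \<theta>)) * norm (exp ((\<theta> - t0) *\<^sub>R L))"
      unfolding exp_extension_def \<theta>_def[symmetric] by (rule norm_mult_ineq)
    also have "\<dots> \<le> real (Suc m) * (1 + norm L) ^ m * ((1 + c) ^ m * (1 + \<bar>s\<bar>) ^ m) * exp ((T - t0) * norm L)"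
      using taylor exp by (intro mult_mono) (auto simp: c_def)
    finally have "norm (exp_extension m L t0 T s)
        \<le> real (Suc m) * (1 + norm L) ^ m * ((1 + c) ^ m * (1 + \<bar>s\<bar>) ^ m) * exp ((T - t0) * norm L)" .
    then show ?thesis
      by (simp add: B_def algebra_simps)
  qed
  then show ?thesis
    unfolding polynomial_growth_def by (metis abs_norm_cancel)
qed

definition endo_entry :: "'a::euclidean_space endo \<Rightarrow> 'a \<Rightarrow> 'a \<Rightarrow> real" where
  "endo_entry e i j = endo_apply e j \<bullet> i"

lemma bounded_linear_endo_entry: "bounded_linear (\<lambda>e. endo_entry e i j)"
  unfolding endo_entry_def
  by (rule bounded_linear_compose[OF bounded_linear_inner_left bounded_linear_endo_apply_left])

lemma abs_endo_entry_le:
  assumes "i \<in> Basis" "j \<in> Basis"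
  shows "\<bar>endo_entry e i j\<bar> \<le> norm e"
proof -
  have "\<bar>endo_entry e i j\<bar> \<le> norm (endo_apply e j)"
    unfolding endo_entry_def using assms(1) by (rule Basis_le_norm)
  also have "\<dots> \<le> norm e"
    using norm_endo_apply[of e j] assms(2) by simp
  finally show ?thesis .
qed

lemma inner_endo_apply: "endo_apply e x \<bullet> i = (\<Sum>j\<in>Basis. (x \<bullet> j) * endo_entry e i j)"
proof -
  interpret apply_right: linear "endo_apply e"
    by transfer (rule bounded_linear.linear[OF blinfun.bounded_linear_right])
  have "endo_apply e x = (\<Sum>j\<in>Basis. (x \<bullet> j) *\<^sub>R endo_apply e j)"
    by (subst euclidean_representation[symmetric, of x]) (simp add: apply_right.sum apply_right.scale)
  then show ?thesis
    by (simp add: endo_entry_def inner_sum_left)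
qed

lemma endo_entry_mult: "endo_entry (a * b) i j = (\<Sum>k\<in>Basis. endo_entry a i k * endo_entry b k j)"
proof -
  have "endo_entry (a * b) i j = endo_apply a (endo_apply b j) \<bullet> i"
    by (simp add: endo_entry_def endo_apply_mult)
  also have "\<dots> = (\<Sum>k\<in>Basis. (endo_apply b j \<bullet> k) * endo_entry a i k)"
    by (rule inner_endo_apply)
  finally show ?thesis
    by (simp add: endo_entry_def mult.commute)
qed

definition endo_CkP :: "nat \<Rightarrow> ('a::euclidean_space \<Rightarrow> 'b::euclidean_space endo) set" where
  "endo_CkP k = {F. \<forall>i\<in>Basis. \<forall>j\<in>Basis. (\<lambda>z. endo_entry (F z) i j) \<in> CkP k}"

lemma endo_CkP_const: "(\<lambda>z. c) \<in> endo_CkP k"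
  by (simp add: endo_CkP_def CkP_const)

lemma endo_CkP_mult:
  assumes "F \<in> endo_CkP k" "G \<in> endo_CkP k"
  shows "(\<lambda>z. F z * G z) \<in> endo_CkP k"
  unfolding endo_CkP_def mem_Collect_eq endo_entry_mult
proof (intro ballI)
  fix i j :: 'b
  assume "i \<in> Basis" "j \<in> Basis"
  with assms show "(\<lambda>z. \<Sum>l\<in>Basis. endo_entry (F z) i l * endo_entry (G z) l j) \<in> CkP k"
    by (intro CkP_sum CkP_mult) (auto simp: endo_CkP_def)
qed

lemma polynomial_growth_endo_entry:
  assumes "polynomial_growth (\<lambda>z. norm (F z))" "i \<in> Basis" "j \<in> Basis"
  shows "polynomial_growth (\<lambda>z. endo_entry (F z) i j)"
  using assms(1) by (rule polynomial_growth_le) (use abs_endo_entry_le[OF assms(2,3)] in simp)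

lemma endo_CkP_0I:
  assumes "polynomial_growth (\<lambda>z. norm (F z))" "\<And>z. (F has_derivative DF z) (at z)"
  shows "F \<in> endo_CkP 0"
proof -
  have "continuous_on UNIV F"
    using assms(2) by (meson differentiable_def differentiable_imp_continuous_on differentiable_on_def)
  then have "continuous_on UNIV (\<lambda>z. endo_entry (F z) i j)" for i j
    by (intro continuous_on_compose2[OF linear_continuous_on[OF bounded_linear_endo_entry]]) auto
  then show ?thesis
    using polynomial_growth_endo_entry[OF assms(1)]
    by (simp add: endo_CkP_def poly_bounded_iff_polynomial_growth)
qed

lemma endo_CkP_SucI:
  assumes "polynomial_growth (\<lambda>z. norm (F z))" "\<And>z. (F has_derivative DF z) (at z)"
    and "\<And>h. h \<in> Basis \<Longrightarrow> (\<lambda>z. DF z h) \<in> endo_CkP k"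
  shows "F \<in> endo_CkP (Suc k)"
  unfolding endo_CkP_def mem_Collect_eq
proof (intro ballI CkP_SucI)
  fix i j :: 'b
  assume "i \<in> Basis" "j \<in> Basis"
  then show "polynomial_growth (\<lambda>z. endo_entry (F z) i j)"
    by (rule polynomial_growth_endo_entry[OF assms(1)])
  show "((\<lambda>z. endo_entry (F z) i j) has_derivative (\<lambda>h. endo_entry (DF z h) i j)) (at z)" for z
    by (rule bounded_linear.has_derivative[OF bounded_linear_endo_entry assms(2)])
  show "(\<lambda>z. endo_entry (DF z h) i j) \<in> CkP k" if "h \<in> Basis" for h
    using assms(3)[OF that] \<open>i \<in> Basis\<close> \<open>j \<in> Basis\<close> by (simp add: endo_CkP_def)
qed

lemma CkP_endo_apply:
  fixes \<Phi> :: "'a::euclidean_space \<Rightarrow> 'b::euclidean_space endo"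
  assumes "\<Phi> \<in> endo_CkP k" "f \<in> CkP k"
  shows "(\<lambda>z. f (endo_apply (\<Phi> (fst z)) (snd z))) \<in> CkP k"
proof (rule CkP_compose[OF _ assms(2)])
  fix i :: 'b
  assume "i \<in> Basis"
  have "(\<lambda>z. endo_entry (\<Phi> (fst z)) i j) \<in> CkP k" if "j \<in> Basis" for j
  proof (rule CkP_compose[of fst])
    show "(\<lambda>z. fst z \<bullet> b) \<in> CkP k" for b :: 'a
      by (intro CkP_bounded_linear bounded_linear_compose[OF bounded_linear_inner_left bounded_linear_fst])
    show "(\<lambda>w. endo_entry (\<Phi> w) i j) \<in> CkP k"
      using assms(1) \<open>i \<in> Basis\<close> that by (simp add: endo_CkP_def)
  qed
  moreover have "(\<lambda>z::'a \<times> 'b. snd z \<bullet> j) \<in> CkP k" for j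
    by (intro CkP_bounded_linear bounded_linear_compose[OF bounded_linear_inner_left bounded_linear_snd])
  ultimately show "(\<lambda>z. endo_apply (\<Phi> (fst z)) (snd z) \<bullet> i) \<in> CkP k"
    unfolding inner_endo_apply by (intro CkP_sum CkP_mult) auto
qed

lemma exp_extension_endo_CkP:
  fixes s :: "'a::euclidean_space \<Rightarrow> real" and L :: "'b::euclidean_space endo"
  assumes s: "bounded_linear s" and "t0 < T" "k < m"
  shows "(\<lambda>z. exp_extension m L t0 T (s z)) \<in> endo_CkP k"
proof -
  have growth: "polynomial_growth (\<lambda>z. norm (exp_extension m L t0 T (s z)))" for m
  proof (rule polynomial_growth_compose[of "\<lambda>u. norm (exp_extension m L t0 T u)" s])
    show "polynomial_growth (\<lambda>u. norm (exp_extension m L t0 T u))"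
      using \<open>t0 < T\<close> by (intro polynomial_growth_exp_extension) simp
    show "polynomial_growth (\<lambda>z. norm (s z))"
      using polynomial_growth_abs[OF polynomial_growth_bounded_linear[OF s]] by simp
  qed
  have deriv: "((\<lambda>z. exp_extension (Suc m) L t0 T (s z)) has_derivative
      (\<lambda>h. s h *\<^sub>R (L * exp_extension m L t0 T (s z)))) (at z)" for m z
    using has_derivative_compose[OF bounded_linear_imp_has_derivative[OF s]
        has_vector_derivative_exp_extension[OF \<open>t0 < T\<close>, unfolded has_vector_derivative_def]] .
  from \<open>k < m\<close> show ?thesis
  proof (induction k arbitrary: m)
    case 0
    then obtain m' where "m = Suc m'"
      using less_imp_Suc_add by blast
    then show ?case
      using endo_CkP_0I[OF growth deriv] by simp
  next
    case (Suc k)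
    then obtain m' where m: "m = Suc m'" "k < m'"
      using Suc_less_eq2 by blast
    have "(\<lambda>z. (s h *\<^sub>R L) * exp_extension m' L t0 T (s z)) \<in> endo_CkP k" for h
      by (intro endo_CkP_mult endo_CkP_const Suc.IH m(2))
    then show ?case
      unfolding m(1) by (intro endo_CkP_SucI[OF growth deriv]) (simp add: mult_scaleR_left)
  qed
qed

lemma exp_sum_endo_CkP:
  fixes w :: "'a::euclidean_space \<Rightarrow> real^'m" and A :: "'m \<Rightarrow> 'b::euclidean_space endo"
  assumes w: "bounded_linear w" and commute: "\<And>i j. A i * A j = A j * A i"
    and bounded: "\<And>v. norm (exp (\<Sum>m\<in>UNIV. (v $ m - c m) *\<^sub>R A m)) \<le> B"
  shows "(\<lambda>z. exp (\<Sum>m\<in>UNIV. (w z $ m - c m) *\<^sub>R A m)) \<in> endo_CkP k"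
proof -
  let ?R = "\<lambda>z. exp (\<Sum>m\<in>UNIV. (w z $ m - c m) *\<^sub>R A m)"
  have growth: "polynomial_growth (\<lambda>z. norm (?R z))"
    using polynomial_growth_const[of B] by (rule polynomial_growth_le) (simp add: bounded)
  have "((\<lambda>z. w z $ m - c m) has_derivative (\<lambda>h. w h $ m)) (at z)" for m z
    using has_derivative_diff[OF bounded_linear_imp_has_derivative has_derivative_const]
      bounded_linear_compose[OF bounded_linear_vec_nth w] by fastforce
  from has_derivative_exp_sum_scaleR[OF finite commute this]
  have deriv: "(?R has_derivative (\<lambda>h. (\<Sum>m\<in>UNIV. w h $ m *\<^sub>R A m) * ?R z)) (at z)" for z .
  show ?thesis
  proof (induction k)
    case 0
    show ?case
      by (rule endo_CkP_0I[OF growth deriv])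
  next
    case (Suc k)
    show ?case
      by (intro endo_CkP_SucI[OF growth deriv] endo_CkP_mult endo_CkP_const Suc.IH)
  qed
qed

section \<open>The transformation factor\<close>

lemma inner_skew_matrix_vector:
  fixes S :: "real^'n^'n"
  assumes "transpose S = - S"
  shows "x \<bullet> (S *v x) = 0"
proof -
  have "x \<bullet> (S *v x) = (transpose S *v x) \<bullet> x"
    by (simp add: dot_lmul_matrix)
  also have "transpose S *v x = - (S *v x)"
    using assms by (simp add: vec_eq_iff matrix_vector_mult_def sum_negf)
  also have "- (S *v x) \<bullet> x = - (x \<bullet> (S *v x))"
    by (simp add: inner_commute)
  finally show ?thesis
    by simp
qed

lemma endo_of_matrix_inject: "endo_of_matrix A = endo_of_matrix B \<longleftrightarrow> A = B"
  by (metis matrix_of_endo_of_matrix)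

lemma matrix_commute_diff_scaleR_sum_squares:
  fixes A0 B :: "real^'n^'n"
  assumes "A0 ** B = B ** A0" "\<And>m. A m ** B = B ** A m"
  shows "(A0 - r *\<^sub>R (\<Sum>m\<in>I. A m ** A m)) ** B = B ** (A0 - r *\<^sub>R (\<Sum>m\<in>I. A m ** A m))"
proof -
  interpret endo_of_matrix: linear endo_of_matrix
    by (rule linear_endo_of_matrix)
  let ?e = endo_of_matrix
  have commute: "?e X * ?e B = ?e B * ?e X" if "X ** B = B ** X" for X
    using that by (simp flip: endo_of_matrix_mult)
  have "?e (A m) ^ 2 * ?e B = ?e B * ?e (A m) ^ 2" for m
    by (rule power_commuting_commutes[OF commute[OF assms(2)]])
  then have "(\<Sum>m\<in>I. ?e (A m) * ?e (A m)) * ?e B = ?e B * (\<Sum>m\<in>I. ?e (A m) * ?e (A m))"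
    by (simp add: sum_distrib_left sum_distrib_right power2_eq_square)
  with commute[OF assms(1)]
  have "?e (A0 - r *\<^sub>R (\<Sum>m\<in>I. A m ** A m)) * ?e B = ?e B * ?e (A0 - r *\<^sub>R (\<Sum>m\<in>I. A m ** A m))"
    by (simp add: endo_of_matrix_mult endo_of_matrix.diff endo_of_matrix.scale endo_of_matrix.sum
        left_diff_distrib right_diff_distrib)
  then show ?thesis
    by (simp only: endo_of_matrix_inject flip: endo_of_matrix_mult)
qed

text \<open>The factor \<open>e\<^bsup>\<ell>(w)\<^esup>\<close> of the paper, with \<open>exp ((w\<^sub>0 - t0) \<Lambda>)\<close> replaced by its
  polynomially bounded extension, so that it is polynomially bounded in \<open>w\<close> together with its
  derivatives.\<close>

definition exp_ell ::
    "nat \<Rightarrow> real^'d^'d \<Rightarrow> ('m::finite \<Rightarrow> real^'d^'d) \<Rightarrow> real \<Rightarrow> real \<Rightarrow> ('m \<Rightarrow> real)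
      \<Rightarrow> real \<times> (real^'m) \<Rightarrow> (real^'d) endo" where
  "exp_ell k \<Lambda> A t0 T w0 w =
    exp_extension k (endo_of_matrix \<Lambda>) t0 T (fst w)
      * exp (\<Sum>m\<in>UNIV. (snd w $ m - w0 m) *\<^sub>R endo_of_matrix (A m))"

lemma exp_ell_endo_CkP:
  fixes A :: "'m::finite \<Rightarrow> real^'d^'d"
  assumes "t0 < T" and commute: "\<And>m m'. A m ** A m' = A m' ** A m"
    and skew: "\<And>m. transpose (A m) = - A m"
  shows "exp_ell (Suc k) \<Lambda> A t0 T w0 \<in> endo_CkP k"
proof -
  interpret apply_left: bounded_linear "\<lambda>a. endo_apply a x" for x
    by (rule bounded_linear_endo_apply_left)
  have "norm (exp (\<Sum>m\<in>UNIV. (v $ m - w0 m) *\<^sub>R endo_of_matrix (A m))) \<le> 1" for v :: "real^'m"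
    by (rule norm_exp_le_one_if_skew)
      (simp add: apply_left.sum apply_left.scaleR inner_sum_right inner_skew_matrix_vector[OF skew])
  moreover have "endo_of_matrix (A i) * endo_of_matrix (A j) = endo_of_matrix (A j) * endo_of_matrix (A i)"
    for i j
    by (simp add: commute flip: endo_of_matrix_mult)
  ultimately show ?thesis
    unfolding exp_ell_def[abs_def] using \<open>t0 < T\<close>
    by (intro endo_CkP_mult exp_extension_endo_CkP exp_sum_endo_CkP bounded_linear_fst bounded_linear_snd)
      auto
qed

lemma exp_ell_inside:
  assumes "t0 \<le> s" "s \<le> T" and commute: "\<And>m. \<Lambda> ** A m = A m ** \<Lambda>"
  shows "endo_apply (exp_ell k \<Lambda> A t0 T w0 (s, v)) x
    = mexp ((s - t0) *\<^sub>R \<Lambda> + (\<Sum>m\<in>UNIV. (v $ m - w0 m) *\<^sub>R A m)) *v x"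
proof -
  interpret endo_of_matrix: linear endo_of_matrix
    by (rule linear_endo_of_matrix)
  let ?S = "\<Sum>m\<in>UNIV. (v $ m - w0 m) *\<^sub>R A m"
  have "endo_of_matrix \<Lambda> * endo_of_matrix (A m) = endo_of_matrix (A m) * endo_of_matrix \<Lambda>" for m
    by (simp add: commute flip: endo_of_matrix_mult)
  then have "endo_of_matrix ((s - t0) *\<^sub>R \<Lambda>) * endo_of_matrix ?S
      = endo_of_matrix ?S * endo_of_matrix ((s - t0) *\<^sub>R \<Lambda>)"
    by (simp add: endo_of_matrix.sum endo_of_matrix.scale sum_distrib_left sum_distrib_right
        scaleR_sum_right mult.commute)
  then show ?thesis
    using assms(1,2)
    by (simp add: exp_ell_def exp_extension_inside mexp_mult_vector exp_add_commuting endo_of_matrix.add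
        endo_of_matrix.scale endo_of_matrix.sum)
qed

lemma mexp_uminus_cancel: "mexp A *v (mexp (- A) *v x) = x"
proof -
  have "endo_of_matrix (- A) = - endo_of_matrix A"
    by (rule linear_neg[OF linear_endo_of_matrix])
  then show ?thesis
    by (simp add: mexp_mult_vector exp_minus_inverse flip: endo_apply_mult)
qed

lemma indep_wiener_initial: "indep_wiener P t0 T w0 W \<Longrightarrow> \<omega> \<in> space P \<Longrightarrow> W m t0 \<omega> = w0 m"
  by (simp add: indep_wiener_def)

lemma equidistant_grid_in_interval:
  fixes t0 T :: real
  assumes "t0 \<le> T" "0 < N" "n \<le> N"
  shows "t0 \<le> t0 + real n * ((T - t0) / real N)" "t0 + real n * ((T - t0) / real N) \<le> T"
proof -
  have "real n / real N \<le> 1"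
    using assms by simp
  then have "(T - t0) * (real n / real N) \<le> (T - t0) * 1"
    using assms by (intro mult_left_mono) auto
  then show "t0 + real n * ((T - t0) / real N) \<le> T"
    by (simp add: field_simps)
  show "t0 \<le> t0 + real n * ((T - t0) / real N)"
    using assms by simp
qed

theorem lemma3:
  fixes P :: "'w measure"
    and t0 T :: real
    and w0 :: "'m::finite \<Rightarrow> real"
    and W :: "'m \<Rightarrow> real \<Rightarrow> 'w \<Rightarrow> real"
    and A0 :: "real^'d^'d"
    and A :: "'m \<Rightarrow> real^'d^'d"
    and g0 :: "real \<Rightarrow> real^'d \<Rightarrow> real^'d"
    and g :: "'m \<Rightarrow> real \<Rightarrow> real^'d \<Rightarrow> real^'d"
    and \<gamma> :: real
    and x0 :: "real^'d"
    and X :: "real \<Rightarrow> 'w \<Rightarrow> real^'d"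
    and Wn :: "nat \<Rightarrow> nat \<Rightarrow> 'w \<Rightarrow> real \<times> (real^'m)"
    and Vn :: "nat \<Rightarrow> nat \<Rightarrow> 'w \<Rightarrow> real^'d"
    and p :: nat
    and f :: "real^'d \<Rightarrow> real"
  defines "h \<equiv> \<lambda>N::nat. (T - t0) / real N"
    and "tg \<equiv> \<lambda>N n::nat. t0 + real n * ((T - t0) / real N)"
    and "Wv \<equiv> \<lambda>t \<omega>. (t, \<chi> m. W m t \<omega>)"
    and "\<Lambda> \<equiv> A0 - \<gamma> *\<^sub>R (\<Sum>m\<in>UNIV. A m ** A m)"
    and "L0 \<equiv> \<lambda>t \<omega>. (t - t0) *\<^sub>R (A0 - \<gamma> *\<^sub>R (\<Sum>m\<in>UNIV. A m ** A m))
                      + (\<Sum>m\<in>UNIV. (W m t \<omega> - w0 m) *\<^sub>R A m)"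
  assumes prob: "prob_space P"
    and tT: "t0 < T"
    and wiener: "indep_wiener P t0 T w0 W"
    and calc: "\<gamma> = 1/2 \<or> \<gamma> = 0"
    and comm0: "\<And>m. A0 ** A m = A m ** A0"
    and comm: "\<And>m m'. A m ** A m' = A m' ** A m"
    and skew: "\<And>m. transpose (A m) = - A m"
    and Xrv: "\<And>t. t \<in> {t0..T} \<Longrightarrow> X t \<in> borel_measurable P"
    and Xinit: "\<And>\<omega>. \<omega> \<in> space P \<Longrightarrow> X t0 \<omega> = x0"
    and Wn_rv: "\<And>N n. Wn N n \<in> borel_measurable P"
    and Vn_rv: "\<And>N n. Vn N n \<in> borel_measurable P"
    and Wn_time: "\<And>N n \<omega>. \<omega> \<in> space P \<Longrightarrow> fst (Wn N n \<omega>) = tg N n"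
    and Wn_init: "\<And>N \<omega>. \<omega> \<in> space P \<Longrightarrow> Wn N 0 \<omega> = Wv t0 \<omega>"
    and weak: "\<And>G :: (real \<times> (real^'m)) \<times> (real^'d) \<Rightarrow> real. G \<in> CkP (2 * (p + 1)) \<Longrightarrow>
        \<exists>c::real. \<forall>N n. 0 < N \<and> n \<le> N \<longrightarrow>
          \<bar>(\<integral>\<omega>. G (Wn N n \<omega>, Vn N n \<omega>) \<partial>P)
            - (\<integral>\<omega>. G (Wv (tg N n) \<omega>, mexp (- L0 (tg N n) \<omega>) *v X (tg N n) \<omega>) \<partial>P)\<bar>
          \<le> c * h N ^ p"
    and fC: "f \<in> CkP (2 * (p + 1))"
  shows "\<exists>c'::real. \<forall>N n. 0 < N \<and> n \<le> N \<longrightarrow>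
          \<bar>(\<integral>\<omega>. f (mexp ((tg N n - t0) *\<^sub>R \<Lambda>
                       + (\<Sum>m\<in>UNIV. (snd (Wn N n \<omega>) $ m - snd (Wn N 0 \<omega>) $ m) *\<^sub>R A m))
                     *v Vn N n \<omega>) \<partial>P)
            - (\<integral>\<omega>. f (X (tg N n) \<omega>) \<partial>P)\<bar>
          \<le> c' * h N ^ p"
proof -
  \<comment> \<open>Of the hypotheses on the processes only the initial value of \<open>W\<close> is used; all the
    stochastic content comes through \<open>weak\<close>, applied to a single test function.\<close>
  define G where "G z = f (endo_apply (exp_ell (Suc (2 * (p + 1))) \<Lambda> A t0 T w0 (fst z)) (snd z))"
    for z :: "(real \<times> (real^'m)) \<times> (real^'d)"
  have "G \<in> CkP (2 * (p + 1))"
    unfolding G_def by (rule CkP_endo_apply[OF exp_ell_endo_CkP[OF tT comm skew] fC])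
  then obtain c where c: "\<forall>N n. 0 < N \<and> n \<le> N \<longrightarrow>
      \<bar>(\<integral>\<omega>. G (Wn N n \<omega>, Vn N n \<omega>) \<partial>P)
        - (\<integral>\<omega>. G (Wv (tg N n) \<omega>, mexp (- L0 (tg N n) \<omega>) *v X (tg N n) \<omega>) \<partial>P)\<bar> \<le> c * h N ^ p"
    using weak by blast
  have commute: "\<Lambda> ** A m = A m ** \<Lambda>" for m
    unfolding \<Lambda>_def by (rule matrix_commute_diff_scaleR_sum_squares[OF comm0 comm])
  have G_grid: "G (w, x) = f (mexp L *v x)"
    if "0 < N" "n \<le> N" "fst w = tg N n"
      and "L = (tg N n - t0) *\<^sub>R \<Lambda> + (\<Sum>m\<in>UNIV. (snd w $ m - w0 m) *\<^sub>R A m)" for N n w x L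
    using equidistant_grid_in_interval[OF less_imp_le[OF tT] that(1,2)] that(3)
    unfolding G_def tg_def that(4) by (cases w) (simp add: exp_ell_inside[OF _ _ commute])
  have "G (Wn N n \<omega>, Vn N n \<omega>) = f (mexp ((tg N n - t0) *\<^sub>R \<Lambda>
      + (\<Sum>m\<in>UNIV. (snd (Wn N n \<omega>) $ m - snd (Wn N 0 \<omega>) $ m) *\<^sub>R A m)) *v Vn N n \<omega>)"
    if "0 < N" "n \<le> N" "\<omega> \<in> space P" for N n \<omega>
    using Wn_init[OF that(3)] indep_wiener_initial[OF wiener that(3)]
    by (intro G_grid[OF that(1,2) Wn_time[OF that(3)]]) (simp add: Wv_def)
  moreover have "G (Wv (tg N n) \<omega>, mexp (- L0 (tg N n) \<omega>) *v X (tg N n) \<omega>) = f (X (tg N n) \<omega>)"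
    if "0 < N" "n \<le> N" for N n \<omega>
  proof -
    have "G (Wv (tg N n) \<omega>, y) = f (mexp (L0 (tg N n) \<omega>) *v y)" for y
      by (rule G_grid[OF that]) (simp_all add: Wv_def L0_def \<Lambda>_def)
    then show ?thesis
      by (simp add: mexp_uminus_cancel)
  qed
  ultimately show ?thesis
    apply (intro exI[of _ c] allI impI)
    subgoal for N n
      using c[rule_format, of N n] by (simp cong: Bochner_Integration.integral_cong)
    done
qed

end
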